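(* Let $k$ be a field. In $\operatorname{Fun}(\Gamma_-^o,k)$, let $P=s_2$ and let $\eta:s_2\to s_1=k$ be the canonical map. Let $P_\bullet$ be the complex with $P_i=P^{\otimes i}$ ($P_0=k$) and differential $d_i:P_i\to P_{i-1}$, $$d_i=\sum_{1\le j\le i}(-1)^j\,\operatorname{id}^{\otimes(j-1)}\otimes\eta\otimes\operatorname{id}^{\otimes(i-j)}.$$ Then $P_\bullet$ is a projective resolution of $t_1$ in $\operatorname{Fun}(\Gamma_-^o,k)$.
   Context: $\Gamma_-$ is the category of finite non-empty sets and surjective maps; $[n]$ denotes a set with $n$ elements. $s_n\in\operatorname{Fun}(\Gamma_-^o,k)$ is the functor represented by $[n]$: $s_n([m])=k[\Gamma_-([m],[n])]$; thus $s_1$ is the constant functor $k$, and the unique maps $[n]\to[1]$ give canonical maps $s_n\to s_1$. $t_1\in\operatorname{Fun}(\Gamma_-^o,k)$ is the functor co-represented by $[1]$: $t_1([1])=k$, $t_1([n])=0$ for $n\ge2$; it is a quotient of $s_1=k$, which gives the augmentation $P_0=k\to t_1$. Tensor products are pointwise. *)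

theory Defs
  imports Complex_Main "HOL-Library.FuncSet" "HOL-Library.Function_Algebras"
begin

(* Gamma_-: objects [m] = {0..<m}, m >= 1; morphisms = surjections *)
definition surjs :: "nat \<Rightarrow> nat \<Rightarrow> (nat \<Rightarrow> nat) set" where
  "surjs m n = {f. f \<in> {0..<m} \<rightarrow>\<^sub>E {0..<n} \<and> f ` {0..<m} = {0..<n}}"

definition lin_on :: "('k::field \<Rightarrow> 'a::ab_group_add \<Rightarrow> 'a) \<Rightarrow> ('k \<Rightarrow> 'b::ab_group_add \<Rightarrow> 'b)
    \<Rightarrow> 'a set \<Rightarrow> ('a \<Rightarrow> 'b) \<Rightarrow> bool" where
  "lin_on s1 s2 A h \<longleftrightarrow> (\<forall>x\<in>A. \<forall>y\<in>A. h (x + y) = h x + h y) \<and> (\<forall>c. \<forall>x\<in>A. h (s1 c x) = s2 c (h x))"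

(* An object of Fun(Gamma_-^o, k): for each m>=1 a k-vector space F m (a subspace of an
   ambient k-vector space 'a), and for each surjection f:[m]->[n] a linear map
   Fm m n f : F n -> F m, functorially (contravariantly). *)
definition is_functor :: "('k::field \<Rightarrow> 'a::ab_group_add \<Rightarrow> 'a) \<Rightarrow> (nat \<Rightarrow> 'a set)
    \<Rightarrow> (nat \<Rightarrow> nat \<Rightarrow> (nat \<Rightarrow> nat) \<Rightarrow> 'a \<Rightarrow> 'a) \<Rightarrow> bool" where
  "is_functor s F Fm \<longleftrightarrow>
     vector_space s \<and>
     (\<forall>m\<ge>1. 0 \<in> F m \<and> (\<forall>x\<in>F m. \<forall>y\<in>F m. x + y \<in> F m) \<and> (\<forall>c. \<forall>x\<in>F m. s c x \<in> F m)) \<and>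
     (\<forall>m n f. m \<ge> 1 \<longrightarrow> n \<ge> 1 \<longrightarrow> f \<in> surjs m n \<longrightarrow>
        (\<forall>x\<in>F n. Fm m n f x \<in> F m) \<and> lin_on s s (F n) (Fm m n f)) \<and>
     (\<forall>m\<ge>1. \<forall>x\<in>F m. Fm m m (restrict id {0..<m}) x = x) \<and>
     (\<forall>l m n f g. l \<ge> 1 \<longrightarrow> m \<ge> 1 \<longrightarrow> n \<ge> 1 \<longrightarrow> f \<in> surjs l m \<longrightarrow> g \<in> surjs m n \<longrightarrow>
        (\<forall>x\<in>F n. Fm l n (restrict (g \<circ> f) {0..<l}) x = Fm l m f (Fm m n g x)))"

definition nat_trans :: "('k::field \<Rightarrow> 'a::ab_group_add \<Rightarrow> 'a) \<Rightarrow> (nat \<Rightarrow> 'a set)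
    \<Rightarrow> (nat \<Rightarrow> nat \<Rightarrow> (nat \<Rightarrow> nat) \<Rightarrow> 'a \<Rightarrow> 'a)
    \<Rightarrow> ('k \<Rightarrow> 'b::ab_group_add \<Rightarrow> 'b) \<Rightarrow> (nat \<Rightarrow> 'b set)
    \<Rightarrow> (nat \<Rightarrow> nat \<Rightarrow> (nat \<Rightarrow> nat) \<Rightarrow> 'b \<Rightarrow> 'b) \<Rightarrow> (nat \<Rightarrow> 'a \<Rightarrow> 'b) \<Rightarrow> bool" where
  "nat_trans sF F Fm sG G Gm \<theta> \<longleftrightarrow>
     (\<forall>m\<ge>1. (\<forall>x\<in>F m. \<theta> m x \<in> G m) \<and> lin_on sF sG (F m) (\<theta> m)) \<and>
     (\<forall>m n f. m \<ge> 1 \<longrightarrow> n \<ge> 1 \<longrightarrow> f \<in> surjs m n \<longrightarrow>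
        (\<forall>x\<in>F n. \<theta> m (Fm m n f x) = Gm m n f (\<theta> n x)))"

(* lifting property of F against all epimorphisms G -> H (epi = pointwise surjective) *)
definition proj_against :: "('k::field \<Rightarrow> 'a::ab_group_add \<Rightarrow> 'a) \<Rightarrow> (nat \<Rightarrow> 'a set)
    \<Rightarrow> (nat \<Rightarrow> nat \<Rightarrow> (nat \<Rightarrow> nat) \<Rightarrow> 'a \<Rightarrow> 'a)
    \<Rightarrow> ('k \<Rightarrow> 'b::ab_group_add \<Rightarrow> 'b) \<Rightarrow> (nat \<Rightarrow> 'b set)
    \<Rightarrow> (nat \<Rightarrow> nat \<Rightarrow> (nat \<Rightarrow> nat) \<Rightarrow> 'b \<Rightarrow> 'b)
    \<Rightarrow> ('k \<Rightarrow> 'c::ab_group_add \<Rightarrow> 'c) \<Rightarrow> (nat \<Rightarrow> 'c set)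
    \<Rightarrow> (nat \<Rightarrow> nat \<Rightarrow> (nat \<Rightarrow> nat) \<Rightarrow> 'c \<Rightarrow> 'c) \<Rightarrow> bool" where
  "proj_against sF F Fm sG G Gm sH H Hm \<longleftrightarrow>
     (is_functor sG G Gm \<longrightarrow> is_functor sH H Hm \<longrightarrow>
      (\<forall>\<pi> \<phi>. nat_trans sG G Gm sH H Hm \<pi> \<longrightarrow> (\<forall>m\<ge>1. \<pi> m ` G m = H m) \<longrightarrow>
          nat_trans sF F Fm sH H Hm \<phi> \<longrightarrow>
          (\<exists>\<psi>. nat_trans sF F Fm sG G Gm \<psi> \<and> (\<forall>m\<ge>1. \<forall>x\<in>F m. \<pi> m (\<psi> m x) = \<phi> m x))))"

(* P_i = s_2^{\<otimes> i}: P_i([m]) = k[Gamma_-([m],[2])]^{\<otimes> i} = k[Gamma_-([m],[2])^i],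
   elements = coefficient functions on lists of length i of surjections [m]->[2] *)
definition basis :: "nat \<Rightarrow> nat \<Rightarrow> (nat \<Rightarrow> nat) list set" where
  "basis m i = {fs. length fs = i \<and> set fs \<subseteq> surjs m 2}"

definition pscale :: "'k::field \<Rightarrow> ((nat \<Rightarrow> nat) list \<Rightarrow> 'k) \<Rightarrow> ((nat \<Rightarrow> nat) list \<Rightarrow> 'k)" where
  "pscale c v = (\<lambda>x. c * v x)"

definition Pobj :: "nat \<Rightarrow> nat \<Rightarrow> ((nat \<Rightarrow> nat) list \<Rightarrow> 'k::field) set" where
  "Pobj i m = {c. \<forall>fs. fs \<notin> basis m i \<longrightarrow> c fs = 0}"

definition Pmap :: "nat \<Rightarrow> nat \<Rightarrow> nat \<Rightarrow> (nat \<Rightarrow> nat) \<Rightarrow> ((nat \<Rightarrow> nat) list \<Rightarrow> 'k::field)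
    \<Rightarrow> ((nat \<Rightarrow> nat) list \<Rightarrow> 'k)" where
  "Pmap i m n g c = (\<lambda>hs. \<Sum>fs\<in>basis n i.
      if map (\<lambda>f. restrict (f \<circ> g) {0..<m}) fs = hs then c fs else 0)"

definition del_at :: "nat \<Rightarrow> 'a list \<Rightarrow> 'a list" where
  "del_at j xs = take j xs @ drop (Suc j) xs"

(* d_i = \<Sum>_{1\<le>j\<le>i} (-1)^j id^{j-1} \<otimes> \<eta> \<otimes> id^{i-j}; since \<eta>(e_f) = 1 this sends
   e_{(f_1..f_i)} to \<Sum>_j (-1)^j e_{(f_1..f_{j-1},f_{j+1}..f_i)} *)
definition d :: "nat \<Rightarrow> nat \<Rightarrow> ((nat \<Rightarrow> nat) list \<Rightarrow> 'k::field) \<Rightarrow> ((nat \<Rightarrow> nat) list \<Rightarrow> 'k)" where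
  "d i m c = (\<lambda>gs. \<Sum>fs\<in>basis m i. \<Sum>j\<in>{1..i}.
      if del_at (j - 1) fs = gs then (-1) ^ j * c fs else 0)"

definition t1obj :: "nat \<Rightarrow> 'k::field set" where
  "t1obj m = (if m = 1 then UNIV else {0})"

definition t1map :: "nat \<Rightarrow> nat \<Rightarrow> (nat \<Rightarrow> nat) \<Rightarrow> 'k::field \<Rightarrow> 'k" where
  "t1map m n g x = (if m = 1 \<and> n = 1 then x else 0)"

definition aug :: "nat \<Rightarrow> ((nat \<Rightarrow> nat) list \<Rightarrow> 'k::field) \<Rightarrow> 'k" where
  "aug m c = (if m = 1 then c [] else 0)"

end

theory Submission
  imports Defs
begin

(* P_i([m]) has as basis the i-tuples of surjections [m] -> [2], and d deletes entries with
   alternating signs. Prepending a fixed surjection s : [m] -> [2], which exists as soon as m >= 2,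
   is a contracting homotopy: d (prepend s y) = - y - prepend s (d y). This gives d o d = 0 by
   induction on i, and exactness for m >= 2; for m = 1 there is no surjection [1] -> [2], so
   P_i([1]) = 0 for i >= 1, while P_0([1]) = k = t_1([1]).
   For projectivity, an i-tuple fs of surjections [m] -> [2] is the pullback of a generic tuple on
   the set V of its columns (identified with [card V]) along the collapse map [m] -> V. Hence P_i is
   a direct sum of representable functors, and a map out of it lifts along an epimorphism once the
   images of the generic basis vectors are lifted (Yoneda). *)

lemma sum_apply: "sum f A x = (\<Sum>a\<in>A. f a x)"
  by (induction A rule: infinite_finite_induct) auto

lemma lin_on_zero: assumes "lin_on s1 s2 A h" "0 \<in> A" shows "h 0 = 0"
proof -
  have "h (0 + 0) = h 0 + h 0" using assms unfolding lin_on_def by blast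
  then have "h 0 = h 0 + h 0" by simp
  then show ?thesis by simp
qed

lemma lin_on_sum:
  assumes "lin_on s1 s2 A h" "0 \<in> A" "\<And>x y. x \<in> A \<Longrightarrow> y \<in> A \<Longrightarrow> x + y \<in> A"
    and "\<And>a. a \<in> S \<Longrightarrow> f a \<in> A"
  shows "h (sum f S) = (\<Sum>a\<in>S. h (f a)) \<and> sum f S \<in> A"
  using assms(4)
proof (induction S rule: infinite_finite_induct)
  case (insert a S)
  then have "f a \<in> A" "sum f S \<in> A" "h (sum f S) = (\<Sum>a\<in>S. h (f a))" by auto
  moreover have "h (f a + sum f S) = h (f a) + h (sum f S)"
    using assms(1) \<open>f a \<in> A\<close> \<open>sum f S \<in> A\<close> unfolding lin_on_def by blast
  ultimately show ?case using insert.hyps assms(3) by simp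
qed (use lin_on_zero[OF assms(1,2)] assms(2) in simp_all)

lemma lin_on_comp:
  assumes "lin_on s1 s2 A h" "lin_on s2 s3 B g" "\<And>x. x \<in> A \<Longrightarrow> h x \<in> B"
    "\<And>x y. x \<in> A \<Longrightarrow> y \<in> A \<Longrightarrow> x + y \<in> A" "\<And>c x. x \<in> A \<Longrightarrow> s1 c x \<in> A"
  shows "lin_on s1 s3 A (\<lambda>x. g (h x))"
  using assms unfolding lin_on_def by (simp add: ball_simps)

lemma module_hom_imp_lin_on: "module_hom s1 s2 h \<Longrightarrow> lin_on s1 s2 A h"
  by (simp add: module_hom_iff lin_on_def)

lemma module_hom_compose_lambda:
  "module_hom s1 s2 f \<Longrightarrow> module_hom s2 s3 g \<Longrightarrow> module_hom s1 s3 (\<lambda>x. g (f x))"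
  using module_hom_compose[of s1 s2 f s3 g] by (simp add: comp_def)

lemma finite_surjs: "finite (surjs m n)"
proof (rule finite_subset)
  show "surjs m n \<subseteq> {0..<m} \<rightarrow>\<^sub>E {0..<n}" by (auto simp: surjs_def)
qed (simp add: finite_PiE)

lemma surjs_imp_le: assumes "f \<in> surjs m n" shows "n \<le> m"
proof -
  have "card (f ` {0..<m}) \<le> m" using card_image_le[of "{0..<m}" f] by simp
  thus ?thesis using assms by (simp add: surjs_def)
qed

lemma surjs_2_nonempty: assumes "2 \<le> m" obtains s where "s \<in> surjs m 2"
proof
  let ?s = "restrict (\<lambda>x. if x = 0 then 0 else 1) {0..<m} :: nat \<Rightarrow> nat"
  have "0 \<in> ?s ` {0..<m}" "1 \<in> ?s ` {0..<m}"
    using assms by (force intro: image_eqI[of _ _ 0], force intro: image_eqI[of _ _ 1])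
  then have "?s ` {0..<m} = {0..<2}"
    by (auto simp: less_2_cases_iff)
  then show "?s \<in> surjs m 2" by (auto simp: surjs_def)
qed

lemma restrict_comp_surjs: assumes "g \<in> surjs m n" "f \<in> surjs n k"
  shows "restrict (f \<circ> g) {0..<m} \<in> surjs m k"
proof -
  have "restrict (f \<circ> g) {0..<m} ` {0..<m} = f ` g ` {0..<m}" by auto
  also have "\<dots> = {0..<k}" using assms by (simp add: surjs_def)
  finally show ?thesis using assms by (auto simp: surjs_def PiE_iff)
qed

lemma finite_basis: "finite (basis m i)"
proof -
  have "basis m i = {fs. set fs \<subseteq> surjs m 2 \<and> length fs = i}" by (auto simp: basis_def)
  thus ?thesis using finite_lists_length_eq[OF finite_surjs] by simp
qed

lemma basis_0: "basis m 0 = {[]}"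
  by (auto simp: basis_def)

lemma Cons_in_basis_iff: "s # fs \<in> basis m (Suc i) \<longleftrightarrow> s \<in> surjs m 2 \<and> fs \<in> basis m i"
  by (auto simp: basis_def)

lemma basis_1_eq_empty: assumes "i \<ge> 1" shows "basis 1 i = {}"
proof -
  have "surjs 1 2 = {}" using surjs_imp_le by fastforce
  with assms show ?thesis by (cases i) (auto simp: basis_def)
qed

definition basis_vec :: "(nat \<Rightarrow> nat) list \<Rightarrow> (nat \<Rightarrow> nat) list \<Rightarrow> 'k::field" where
  "basis_vec fs = (\<lambda>hs. if hs = fs then 1 else 0)"

lemma basis_vec_Pobj: "fs \<in> basis m i \<Longrightarrow> basis_vec fs \<in> Pobj i m"
  by (auto simp: basis_vec_def Pobj_def)

lemma Pobj_0: "0 \<in> Pobj i m"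
  and Pobj_add: "x \<in> Pobj i m \<Longrightarrow> y \<in> Pobj i m \<Longrightarrow> x + y \<in> Pobj i m"
  and Pobj_pscale: "x \<in> Pobj i m \<Longrightarrow> pscale a x \<in> Pobj i m"
  and Pobj_uminus: "x \<in> Pobj i m \<Longrightarrow> - x \<in> Pobj i m"
  by (auto simp: Pobj_def pscale_def)

lemma Pobj_1: assumes "i \<ge> 1" shows "Pobj i 1 = {0}"
  using basis_1_eq_empty[OF assms] by (auto simp: Pobj_def)

lemma Pobj_eq_sum_basis_vec: assumes "c \<in> Pobj i m"
  shows "c = (\<Sum>fs\<in>basis m i. pscale (c fs) (basis_vec fs))"
proof
  fix hs
  have "(\<Sum>fs\<in>basis m i. pscale (c fs) (basis_vec fs)) hs = (\<Sum>fs\<in>basis m i. if hs = fs then c hs else 0)"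
    by (auto simp: sum_apply pscale_def basis_vec_def intro!: sum.cong)
  also have "\<dots> = c hs" using assms finite_basis[of m i] by (auto simp: Pobj_def)
  finally show "c hs = (\<Sum>fs\<in>basis m i. pscale (c fs) (basis_vec fs)) hs" by simp
qed

lemma lin_on_Pobj_expansion: assumes "lin_on pscale s (Pobj i m) h" "c \<in> Pobj i m"
  shows "h c = (\<Sum>fs\<in>basis m i. s (c fs) (h (basis_vec fs)))"
proof -
  have vecs: "\<And>fs. fs \<in> basis m i \<Longrightarrow> pscale (c fs) (basis_vec fs) \<in> Pobj i m"
    by (rule Pobj_pscale[OF basis_vec_Pobj])
  have "h c = h (\<Sum>fs\<in>basis m i. pscale (c fs) (basis_vec fs))"
    using Pobj_eq_sum_basis_vec[OF assms(2)] by simp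
  also have "\<dots> = (\<Sum>fs\<in>basis m i. h (pscale (c fs) (basis_vec fs)))"
    using lin_on_sum[OF assms(1) Pobj_0 Pobj_add vecs] by (rule conjunct1)
  also have "\<dots> = (\<Sum>fs\<in>basis m i. s (c fs) (h (basis_vec fs)))"
  proof (rule sum.cong[OF refl])
    fix fs assume "fs \<in> basis m i"
    then have "basis_vec fs \<in> Pobj i m" by (rule basis_vec_Pobj)
    then show "h (pscale (c fs) (basis_vec fs)) = s (c fs) (h (basis_vec fs))"
      using assms(1) unfolding lin_on_def by blast
  qed
  finally show ?thesis .
qed

lemma lin_on_Pobj_eqI:
  assumes "lin_on pscale s (Pobj i m) h1" "lin_on pscale s (Pobj i m) h2"
    and "\<And>fs. fs \<in> basis m i \<Longrightarrow> h1 (basis_vec fs) = h2 (basis_vec fs)" and "c \<in> Pobj i m"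
  shows "h1 c = h2 c"
  using lin_on_Pobj_expansion[OF assms(1,4)] lin_on_Pobj_expansion[OF assms(2,4)] assms(3) by simp

lemma module_pscale: "module (pscale :: 'k::field \<Rightarrow> _)"
  by unfold_locales (auto simp: pscale_def fun_eq_iff algebra_simps)

interpretation pscale: module_pair "pscale :: 'k::field \<Rightarrow> ((nat \<Rightarrow> nat) list \<Rightarrow> 'k) \<Rightarrow> _" pscale
  by (intro module_pair.intro module_pscale)

lemma module_hom_Pobj_eqI:
  assumes "module_hom pscale pscale h1" "module_hom pscale pscale h2"
    and "\<And>fs. fs \<in> basis m i \<Longrightarrow> h1 (basis_vec fs) = h2 (basis_vec fs)" and "c \<in> Pobj i m"
  shows "h1 c = h2 c"
  by (rule lin_on_Pobj_eqI[OF module_hom_imp_lin_on module_hom_imp_lin_on]) (use assms in auto)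

section \<open>The functors P_i\<close>

definition pull :: "nat \<Rightarrow> (nat \<Rightarrow> nat) \<Rightarrow> (nat \<Rightarrow> nat) list \<Rightarrow> (nat \<Rightarrow> nat) list" where
  "pull m g fs = map (\<lambda>f. restrict (f \<circ> g) {0..<m}) fs"

lemma pull_basis: "g \<in> surjs m n \<Longrightarrow> fs \<in> basis n i \<Longrightarrow> pull m g fs \<in> basis m i"
  by (auto simp: pull_def basis_def intro: restrict_comp_surjs)

lemma pull_id: assumes "fs \<in> basis m i" shows "pull m (restrict id {0..<m}) fs = fs"
proof -
  have "restrict (f \<circ> restrict id {0..<m}) {0..<m} = f" if "f \<in> surjs m 2" for f
    using that by (auto simp: surjs_def PiE_iff extensional_def fun_eq_iff)
  thus ?thesis using assms by (auto simp: pull_def basis_def intro!: map_idI)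
qed

lemma pull_comp: assumes "f \<in> surjs l m" "g \<in> surjs m n"
  shows "pull l (restrict (g \<circ> f) {0..<l}) fs = pull l f (pull m g fs)"
  using assms by (auto simp: pull_def surjs_def PiE_iff fun_eq_iff)

lemma pull_del_at: "pull m f (del_at j fs) = del_at j (pull m f fs)"
  by (simp add: pull_def del_at_def take_map drop_map)

lemma Pmap_basis_vec: assumes "gs \<in> basis n i"
  shows "Pmap i m n g (basis_vec gs) = basis_vec (pull m g gs)"
proof
  fix hs
  have "Pmap i m n g (basis_vec gs) hs
      = (\<Sum>fs\<in>basis n i. if fs = gs then (if pull m g gs = hs then 1 else 0) else 0)"
    unfolding Pmap_def basis_vec_def pull_def by (rule sum.cong) auto
  also have "\<dots> = basis_vec (pull m g gs) hs"
    using assms finite_basis[of n i] by (auto simp: basis_vec_def)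
  finally show "Pmap i m n g (basis_vec gs) hs = basis_vec (pull m g gs) hs" .
qed

lemma module_hom_Pmap: "module_hom pscale pscale (Pmap i m n g :: _ \<Rightarrow> _ \<Rightarrow> 'k::field)"
  unfolding module_hom_iff Pmap_def pscale_def fun_eq_iff
  by (auto simp: module_pscale[unfolded pscale_def] sum.distrib[symmetric] sum_distrib_left
      intro!: sum.cong)

lemma Pmap_Pobj: assumes "g \<in> surjs m n" shows "Pmap i m n g c \<in> Pobj i m"
  using pull_basis[OF assms] unfolding Pobj_def Pmap_def pull_def[symmetric]
  by (auto intro!: sum.neutral)

lemma is_functor_P: "is_functor pscale (Pobj i :: nat \<Rightarrow> ((nat \<Rightarrow> nat) list \<Rightarrow> 'k::field) set) (Pmap i)"
  unfolding is_functor_def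
proof (intro conjI allI impI ballI)
  show "vector_space (pscale :: 'k \<Rightarrow> _)"
    using module_pscale by (simp add: module_iff_vector_space)
next
  fix m and x :: "_ \<Rightarrow> 'k" assume x: "x \<in> Pobj i m"
  show "Pmap i m m (restrict id {0..<m}) x = x"
    by (rule module_hom_Pobj_eqI[OF module_hom_Pmap pscale.m1.module_hom_ident _ x])
       (simp add: Pmap_basis_vec pull_id)
next
  fix l m n f g and x :: "_ \<Rightarrow> 'k" assume fg: "f \<in> surjs l m" "g \<in> surjs m n" and x: "x \<in> Pobj i n"
  show "Pmap i l n (restrict (g \<circ> f) {0..<l}) x = Pmap i l m f (Pmap i m n g x)"
    by (rule module_hom_Pobj_eqI[OF module_hom_Pmap
          module_hom_compose_lambda[OF module_hom_Pmap module_hom_Pmap] _ x])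
       (simp add: Pmap_basis_vec pull_comp[OF fg] pull_basis[OF fg(2)])
qed (auto intro: Pobj_0 Pobj_add Pobj_pscale Pmap_Pobj module_hom_imp_lin_on[OF module_hom_Pmap])

section \<open>The differential and its contracting homotopy\<close>

lemma del_at_basis: assumes "fs \<in> basis m (Suc i)" "j \<le> i" shows "del_at j fs \<in> basis m i"
  using assms set_take_subset[of j fs] set_drop_subset[of "Suc j" fs]
  by (auto simp: basis_def del_at_def)

lemma d_basis_vec: assumes "fs \<in> basis m i"
  shows "d i m (basis_vec fs) = (\<Sum>j\<in>{1..i}. pscale ((-1) ^ j) (basis_vec (del_at (j - 1) fs)))"
proof
  fix gs
  have "d i m (basis_vec fs) gs = (\<Sum>j\<in>{1..i}. \<Sum>hs\<in>basis m i.
      if hs = fs then (if del_at (j - 1) fs = gs then (-1) ^ j else 0) else 0)"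
    unfolding d_def basis_vec_def by (subst sum.swap) (auto intro!: sum.cong)
  also have "\<dots> = (\<Sum>j\<in>{1..i}. pscale ((-1) ^ j) (basis_vec (del_at (j - 1) fs))) gs"
    using assms finite_basis[of m i] by (auto simp: sum_apply pscale_def basis_vec_def intro!: sum.cong)
  finally show "d i m (basis_vec fs) gs
      = (\<Sum>j\<in>{1..i}. pscale ((-1) ^ j) (basis_vec (del_at (j - 1) fs))) gs" .
qed

lemma module_hom_d: "module_hom pscale pscale (d i m :: _ \<Rightarrow> _ \<Rightarrow> 'k::field)"
  unfolding module_hom_iff d_def pscale_def fun_eq_iff
  by (auto simp: module_pscale[unfolded pscale_def] sum.distrib[symmetric] sum_distrib_left algebra_simps
      intro!: sum.cong)

lemma d_0: "d 0 m c = 0"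
  by (auto simp: d_def fun_eq_iff)

lemma d_Pobj: "d (Suc i) m c \<in> Pobj i m"
proof -
  have "del_at (j - 1) fs \<noteq> gs"
    if "gs \<notin> basis m i" "fs \<in> basis m (Suc i)" "j \<in> {1..Suc i}" for fs gs j
  proof -
    have "j - 1 \<le> i" using that(3) by auto
    then show ?thesis using del_at_basis[OF that(2)] that(1) by auto
  qed
  then have "d (Suc i) m c gs = 0" if "gs \<notin> basis m i" for gs
    unfolding d_def using that by (intro sum.neutral ballI) auto
  then show ?thesis unfolding Pobj_def by blast
qed

lemma nat_trans_d:
  "nat_trans pscale (Pobj (Suc i) :: nat \<Rightarrow> ((nat \<Rightarrow> nat) list \<Rightarrow> 'k::field) set) (Pmap (Suc i))
     pscale (Pobj i) (Pmap i) (d (Suc i))"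
  unfolding nat_trans_def
proof (intro conjI allI impI ballI)
  fix m n f and x :: "_ \<Rightarrow> 'k" assume f: "f \<in> surjs m n" and x: "x \<in> Pobj (Suc i) n"
  show "d (Suc i) m (Pmap (Suc i) m n f x) = Pmap i m n f (d (Suc i) n x)"
  proof (rule module_hom_Pobj_eqI[OF module_hom_compose_lambda[OF module_hom_Pmap module_hom_d]
        module_hom_compose_lambda[OF module_hom_d module_hom_Pmap] _ x])
    fix fs assume fs: "fs \<in> basis n (Suc i)"
    have deleted: "del_at (j - 1) fs \<in> basis n i" if "j \<in> {1..Suc i}" for j
      using del_at_basis[OF fs, of "j - 1"] that by auto
    have "Pmap i m n f (d (Suc i) n (basis_vec fs :: _ \<Rightarrow> 'k))
        = (\<Sum>j\<in>{1..Suc i}. pscale ((-1) ^ j) (Pmap i m n f (basis_vec (del_at (j - 1) fs))))"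
      by (simp only: d_basis_vec[OF fs] module_hom.sum[OF module_hom_Pmap]
          module_hom.scale[OF module_hom_Pmap])
    also have "\<dots> = (\<Sum>j\<in>{1..Suc i}. pscale ((-1) ^ j) (basis_vec (del_at (j - 1) (pull m f fs))))"
    proof (rule sum.cong[OF refl])
      fix j assume "j \<in> {1..Suc i}"
      then show "pscale ((-1) ^ j) (Pmap i m n f (basis_vec (del_at (j - 1) fs)))
          = pscale ((-1) ^ j) (basis_vec (del_at (j - 1) (pull m f fs)) :: _ \<Rightarrow> 'k)"
        by (simp only: Pmap_basis_vec[OF deleted] pull_del_at)
    qed
    also have "\<dots> = d (Suc i) m (Pmap (Suc i) m n f (basis_vec fs))"
      by (simp only: Pmap_basis_vec[OF fs] d_basis_vec[OF pull_basis[OF f fs]])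
    finally show "d (Suc i) m (Pmap (Suc i) m n f (basis_vec fs))
        = Pmap i m n f (d (Suc i) n (basis_vec fs :: _ \<Rightarrow> 'k))"
      by (rule sym)
  qed
qed (auto intro: d_Pobj module_hom_imp_lin_on[OF module_hom_d])

definition prepend :: "(nat \<Rightarrow> nat) \<Rightarrow> ((nat \<Rightarrow> nat) list \<Rightarrow> 'k::field) \<Rightarrow> (nat \<Rightarrow> nat) list \<Rightarrow> 'k" where
  "prepend s c = (\<lambda>gs. case gs of [] \<Rightarrow> 0 | g # gs' \<Rightarrow> if g = s then c gs' else 0)"

lemma module_hom_prepend: "module_hom pscale pscale (prepend s :: _ \<Rightarrow> _ \<Rightarrow> 'k::field)"
  by (auto simp: module_hom_iff module_pscale prepend_def pscale_def fun_eq_iff split: list.split)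

lemma prepend_basis_vec: "prepend s (basis_vec fs) = basis_vec (s # fs)"
  by (auto simp: prepend_def basis_vec_def fun_eq_iff split: list.split)

lemma prepend_Pobj: "s \<in> surjs m 2 \<Longrightarrow> c \<in> Pobj i m \<Longrightarrow> prepend s c \<in> Pobj (Suc i) m"
  by (auto simp: prepend_def Pobj_def basis_def split: list.split)

lemma del_at_Cons: "j \<ge> 1 \<Longrightarrow> del_at j (s # fs) = s # del_at (j - 1) fs"
  by (cases j) (auto simp: del_at_def)

lemma d_basis_vec_Cons: assumes s: "s \<in> surjs m 2" and fs: "fs \<in> basis m i"
  shows "d (Suc i) m (basis_vec (s # fs) :: _ \<Rightarrow> 'k::field)
    = - basis_vec fs - prepend s (d i m (basis_vec fs))"
proof -
  let ?e = "\<lambda>j. pscale ((-1) ^ j) (basis_vec (del_at (j - 1) fs)) :: _ \<Rightarrow> 'k"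
  have "d (Suc i) m (basis_vec (s # fs) :: _ \<Rightarrow> 'k)
      = (\<Sum>j\<in>{1..Suc i}. pscale ((-1) ^ j) (basis_vec (del_at (j - 1) (s # fs))))"
    by (rule d_basis_vec) (simp add: Cons_in_basis_iff s fs)
  also have "\<dots> = pscale (-1) (basis_vec fs)
      + (\<Sum>j\<in>{Suc 1..Suc i}. pscale ((-1) ^ j) (basis_vec (del_at (j - 1) (s # fs))))"
    by (subst sum.atLeast_Suc_atMost) (auto simp: del_at_def)
  also have "(\<Sum>j\<in>{Suc 1..Suc i}. pscale ((-1) ^ j) (basis_vec (del_at (j - 1) (s # fs))))
      = (\<Sum>j\<in>{1..i}. - prepend s (?e j))"
  proof (subst sum.shift_bounds_cl_Suc_ivl, rule sum.cong[OF refl])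
    fix j :: nat assume "j \<in> {1..i}"
    then have "del_at (Suc j - 1) (s # fs) = s # del_at (j - 1) fs" by (simp add: del_at_Cons)
    moreover have "prepend s (?e j) = pscale ((-1) ^ j) (basis_vec (s # del_at (j - 1) fs))"
      by (simp only: module_hom.scale[OF module_hom_prepend] prepend_basis_vec)
    ultimately show
      "pscale ((-1) ^ Suc j) (basis_vec (del_at (Suc j - 1) (s # fs))) = - prepend s (?e j)"
      by (simp add: pscale_def fun_eq_iff)
  qed
  also have "\<dots> = - prepend s (d i m (basis_vec fs))"
    by (simp add: d_basis_vec[OF fs] module_hom.sum[OF module_hom_prepend] sum_negf)
  finally show ?thesis by (simp add: pscale_def fun_eq_iff)
qed

lemma d_prepend: assumes "s \<in> surjs m 2" "y \<in> Pobj i m"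
  shows "d (Suc i) m (prepend s y) = - y - prepend s (d i m (y :: _ \<Rightarrow> 'k::field))"
proof (rule module_hom_Pobj_eqI[OF _ _ _ assms(2)])
  show "module_hom pscale pscale (\<lambda>y. d (Suc i) m (prepend s y) :: _ \<Rightarrow> 'k)"
    by (rule module_hom_compose_lambda[OF module_hom_prepend module_hom_d])
  show "module_hom pscale pscale (\<lambda>y. - y - prepend s (d i m y) :: _ \<Rightarrow> 'k)"
    by (intro pscale.module_hom_sub pscale.module_hom_neg pscale.m1.module_hom_ident
        module_hom_compose_lambda[OF module_hom_d module_hom_prepend])
qed (simp add: prepend_basis_vec d_basis_vec_Cons[OF assms(1)])

lemma d_d: "c \<in> Pobj (Suc i) m \<Longrightarrow> d i m (d (Suc i) m (c :: _ \<Rightarrow> 'k::field)) = 0"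
proof (induction i arbitrary: c)
  case 0
  then show ?case by (simp add: d_0)
next
  case (Suc i)
  show ?case
  proof (rule module_hom_Pobj_eqI[OF module_hom_compose_lambda[OF module_hom_d module_hom_d]
        pscale.module_hom_zero _ Suc.prems])
    fix fs assume "fs \<in> basis m (Suc (Suc i))"
    then obtain s fs' where fs: "fs = s # fs'" and s: "s \<in> surjs m 2" and fs': "fs' \<in> basis m (Suc i)"
      by (cases fs) (auto simp: basis_def)
    define y where "y = d (Suc i) m (basis_vec fs' :: _ \<Rightarrow> 'k)"
    have y: "y \<in> Pobj i m" unfolding y_def by (rule d_Pobj)
    have "d i m y = 0" unfolding y_def by (rule Suc.IH[OF basis_vec_Pobj[OF fs']])
    then have "d (Suc i) m (prepend s y) = - y"
      by (simp add: d_prepend[OF s y] module_hom.zero[OF module_hom_prepend])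
    then show "d (Suc i) m (d (Suc (Suc i)) m (basis_vec fs)) = (0 :: _ \<Rightarrow> 'k)"
      by (simp add: fs d_basis_vec_Cons[OF s fs'] module_hom.diff[OF module_hom_d]
          module_hom.neg[OF module_hom_d] flip: y_def)
  qed
qed

section \<open>Exactness and the augmentation\<close>

lemma cycle_imp_boundary:
  assumes "2 \<le> m" "c \<in> Pobj i m" "d i m c = (0 :: _ \<Rightarrow> 'k::field)"
  shows "c \<in> d (Suc i) m ` Pobj (Suc i) m"
proof -
  obtain s where s: "s \<in> surjs m 2" using surjs_2_nonempty[OF assms(1)] .
  have "c = d (Suc i) m (prepend s (- c))"
    using d_prepend[OF s Pobj_uminus[OF assms(2)]] assms(3)
    by (simp add: module_hom.neg[OF module_hom_d] module_hom.zero[OF module_hom_prepend])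
  moreover have "prepend s (- c) \<in> Pobj (Suc i) m"
    by (rule prepend_Pobj[OF s Pobj_uminus[OF assms(2)]])
  ultimately show ?thesis by (rule image_eqI)
qed

lemma ker_aug_eq_range_d: assumes "m \<ge> 1"
  shows "{c \<in> (Pobj 0 m :: ((nat \<Rightarrow> nat) list \<Rightarrow> 'k::field) set). aug m c = 0} = d 1 m ` Pobj 1 m"
proof (cases "m = 1")
  case True
  have "c = 0" if "c \<in> Pobj 0 m" "aug m c = (0 :: 'k)" for c
  proof -
    have "c fs = 0" for fs
      using that True by (cases "fs = []") (auto simp: aug_def Pobj_def basis_0)
    then show ?thesis by (simp add: fun_eq_iff)
  qed
  then have "{c \<in> (Pobj 0 m :: ((nat \<Rightarrow> nat) list \<Rightarrow> 'k) set). aug m c = 0} = {0}"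
    using Pobj_0 by (auto simp: aug_def)
  moreover have "(Pobj 1 m :: ((nat \<Rightarrow> nat) list \<Rightarrow> 'k) set) = {0}"
    using True Pobj_1[of 1] by simp
  ultimately show ?thesis by (simp add: module_hom.zero[OF module_hom_d])
next
  case False
  with assms have "2 \<le> m" by simp
  then show ?thesis
    using False cycle_imp_boundary[of m _ 0] d_Pobj[of 0 m] by (auto simp: aug_def d_0)
qed

lemma ker_d_eq_range_d: assumes "m \<ge> 1" "i \<ge> 1"
  shows "{c \<in> (Pobj i m :: ((nat \<Rightarrow> nat) list \<Rightarrow> 'k::field) set). d i m c = 0} = d (Suc i) m ` Pobj (Suc i) m"
proof
  show "d (Suc i) m ` Pobj (Suc i) m \<subseteq> {c \<in> (Pobj i m :: ((nat \<Rightarrow> nat) list \<Rightarrow> 'k) set). d i m c = 0}"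
    using d_Pobj d_d by blast
next
  show "{c \<in> (Pobj i m :: ((nat \<Rightarrow> nat) list \<Rightarrow> 'k) set). d i m c = 0} \<subseteq> d (Suc i) m ` Pobj (Suc i) m"
  proof (cases "m = 1")
    case True
    show ?thesis
    proof
      fix c :: "_ \<Rightarrow> 'k" assume "c \<in> {c \<in> Pobj i m. d i m c = 0}"
      then have "c = 0" using True assms(2) Pobj_1 by auto
      then show "c \<in> d (Suc i) m ` Pobj (Suc i) m"
        using Pobj_0 module_hom.zero[OF module_hom_d] by (metis image_eqI)
    qed
  next
    case False
    with assms(1) have "2 \<le> m" by simp
    then show ?thesis using cycle_imp_boundary by blast
  qed
qed

lemma is_functor_t1: "is_functor ((*) :: 'k::field \<Rightarrow> 'k \<Rightarrow> 'k) t1obj t1map"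
  unfolding is_functor_def
proof (intro conjI allI impI ballI)
  show "vector_space ((*) :: 'k \<Rightarrow> 'k \<Rightarrow> 'k)"
    by unfold_locales (auto simp: algebra_simps)
next
  fix l m n f g and x :: 'k
  assume "1 \<le> l" "1 \<le> m" "1 \<le> n" "f \<in> surjs l m" "g \<in> surjs m n"
  moreover from this have "m \<le> l" "n \<le> m" using surjs_imp_le by auto
  ultimately show "t1map l n (restrict (g \<circ> f) {0..<l}) x = t1map l m f (t1map m n g x)"
    by (auto simp: t1map_def)
qed (auto simp: t1obj_def t1map_def lin_on_def)

lemma nat_trans_aug:
  "nat_trans pscale (Pobj 0 :: nat \<Rightarrow> ((nat \<Rightarrow> nat) list \<Rightarrow> 'k::field) set) (Pmap 0) (*) t1obj t1map aug"
  unfolding nat_trans_def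
proof (intro conjI allI impI ballI)
  fix m n f and x :: "_ \<Rightarrow> 'k" assume "1 \<le> m" "1 \<le> n" "f \<in> surjs m n"
  moreover from this have "n \<le> m" using surjs_imp_le by auto
  ultimately show "aug m (Pmap 0 m n f x) = t1map m n f (aug n x)"
    by (auto simp: aug_def t1map_def Pmap_def basis_0)
qed (auto simp: aug_def t1obj_def lin_on_def pscale_def)

lemma image_aug_Pobj: assumes "m \<ge> 1"
  shows "aug m ` (Pobj 0 m :: ((nat \<Rightarrow> nat) list \<Rightarrow> 'k::field) set) = t1obj m"
proof (cases "m = 1")
  case True
  have "a \<in> aug 1 ` (Pobj 0 1 :: ((nat \<Rightarrow> nat) list \<Rightarrow> 'k) set)" for a :: 'k
  proof (rule image_eqI)
    show "pscale a (basis_vec []) \<in> (Pobj 0 1 :: ((nat \<Rightarrow> nat) list \<Rightarrow> 'k) set)"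
      by (rule Pobj_pscale[OF basis_vec_Pobj]) (simp add: basis_0)
  qed (simp add: aug_def pscale_def basis_vec_def)
  then show ?thesis using True by (auto simp: t1obj_def)
next
  case False
  then show ?thesis using Pobj_0 by (auto simp: aug_def t1obj_def)
qed

section \<open>Projectivity\<close>

definition column :: "(nat \<Rightarrow> nat) list \<Rightarrow> nat \<Rightarrow> nat list" where
  "column fs x = map (\<lambda>f. f x) fs"

definition columns :: "nat \<Rightarrow> (nat \<Rightarrow> nat) list \<Rightarrow> nat list set" where
  "columns m fs = column fs ` {0..<m}"

(* Any enumeration of V will do: it only matters that it depends on V alone, which makes
   collapse compatible with pullback (collapse_pull). *)
definition index_of :: "nat list set \<Rightarrow> nat list \<Rightarrow> nat" where
  "index_of V = (SOME h. bij_betw h V {0..<card V})"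

definition collapse :: "nat \<Rightarrow> (nat \<Rightarrow> nat) list \<Rightarrow> nat \<Rightarrow> nat" where
  "collapse m fs = restrict (\<lambda>x. index_of (columns m fs) (column fs x)) {0..<m}"

definition generic :: "nat \<Rightarrow> nat list set \<Rightarrow> (nat \<Rightarrow> nat) list" where
  "generic i V = map (\<lambda>j. restrict (\<lambda>y. inv_into V (index_of V) y ! j) {0..<card V}) [0..<i]"

lemma bij_betw_index_of: assumes "finite V" shows "bij_betw (index_of V) V {0..<card V}"
  unfolding index_of_def by (rule someI_ex[OF ex_bij_betw_finite_nat[OF assms]])

lemma card_columns_ge_1: "m \<ge> 1 \<Longrightarrow> card (columns m fs) \<ge> 1"
  by (simp add: columns_def Suc_le_eq card_gt_0_iff)

lemma collapse_surjs: "collapse m fs \<in> surjs m (card (columns m fs))"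
proof -
  have "collapse m fs ` {0..<m} = index_of (columns m fs) ` columns m fs"
    by (auto simp: collapse_def columns_def)
  also have "\<dots> = {0..<card (columns m fs)}"
    using bij_betw_index_of[of "columns m fs"] by (simp add: columns_def bij_betw_def)
  finally show ?thesis by (auto simp: surjs_def collapse_def)
qed

lemma generic_collapse:
  assumes "fs \<in> basis m i" "j < i" "x < m"
  shows "(generic i (columns m fs) ! j) (collapse m fs x) = (fs ! j) x"
proof -
  let ?V = "columns m fs"
  have "column fs x \<in> ?V" using assms(3) by (simp add: columns_def)
  moreover have "inj_on (index_of ?V) ?V"
    using bij_betw_index_of[of ?V] by (simp add: columns_def bij_betw_def)
  moreover have "collapse m fs x < card ?V"
    using collapse_surjs[of m fs] assms(3) by (auto simp: surjs_def)
  ultimately show ?thesis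
    using assms by (simp add: generic_def collapse_def column_def basis_def)
qed

lemma pull_collapse_generic:
  assumes "fs \<in> basis m i" shows "pull m (collapse m fs) (generic i (columns m fs)) = fs"
proof (rule nth_equalityI)
  show "length (pull m (collapse m fs) (generic i (columns m fs))) = length fs"
    using assms by (simp add: pull_def generic_def basis_def)
next
  fix j assume "j < length (pull m (collapse m fs) (generic i (columns m fs)))"
  then have j: "j < i" by (simp add: pull_def generic_def)
  then have "fs ! j \<in> surjs m 2" using assms by (auto simp: basis_def)
  then have "fs ! j \<in> extensional {0..<m}" by (simp add: surjs_def PiE_iff)
  then show "pull m (collapse m fs) (generic i (columns m fs)) ! j = fs ! j"
    using generic_collapse[OF assms j] j by (auto simp: pull_def generic_def extensional_def fun_eq_iff)
qed

lemma generic_basis: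
  assumes "fs \<in> basis m i" shows "generic i (columns m fs) \<in> basis (card (columns m fs)) i"
proof -
  let ?t = "card (columns m fs)" and ?q = "collapse m fs"
  have "generic i (columns m fs) ! j \<in> surjs ?t 2" if j: "j < i" for j
  proof -
    let ?g = "generic i (columns m fs) ! j"
    have fj: "fs ! j \<in> surjs m 2" using assms j by (auto simp: basis_def)
    have q: "?q ` {0..<m} = {0..<?t}" using collapse_surjs by (simp add: surjs_def)
    have "?g ` {0..<?t} = ?g ` ?q ` {0..<m}" by (simp add: q)
    also have "\<dots> = (fs ! j) ` {0..<m}" using generic_collapse[OF assms j] by (force simp: image_iff)
    also have "\<dots> = {0..<2}" using fj by (simp add: surjs_def)
    finally have "?g ` {0..<?t} = {0..<2}" .
    moreover have "?g \<in> extensional {0..<?t}" using j by (simp add: generic_def)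
    ultimately show ?thesis by (auto simp: surjs_def PiE_iff)
  qed
  then show ?thesis by (auto simp: basis_def generic_def in_set_conv_nth)
qed

lemma column_pull: "x < m \<Longrightarrow> column (pull m g fs) x = column fs (g x)"
  by (simp add: column_def pull_def)

lemma columns_pull: assumes "g \<in> surjs m n" shows "columns m (pull m g fs) = columns n fs"
proof -
  have "columns m (pull m g fs) = column fs ` g ` {0..<m}"
    by (auto simp: columns_def column_pull image_iff)
  then show ?thesis using assms by (simp add: surjs_def columns_def)
qed

lemma collapse_pull: assumes "g \<in> surjs m n"
  shows "collapse m (pull m g fs) = restrict (collapse n fs \<circ> g) {0..<m}"
  using assms by (auto simp: collapse_def columns_pull column_pull surjs_def PiE_iff fun_eq_iff)

lemma nat_trans_basis_vec:
  assumes \<theta>: "nat_trans pscale (Pobj i :: nat \<Rightarrow> ((nat \<Rightarrow> nat) list \<Rightarrow> 'k::field) set) (Pmap i) sH H Hm \<theta>"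
    and m: "m \<ge> 1" and fs: "fs \<in> basis m i"
  shows "\<theta> m (basis_vec fs) = Hm m (card (columns m fs)) (collapse m fs)
           (\<theta> (card (columns m fs)) (basis_vec (generic i (columns m fs))))"
proof -
  let ?t = "card (columns m fs)"
  have "basis_vec (generic i (columns m fs)) \<in> (Pobj i ?t :: ((nat \<Rightarrow> nat) list \<Rightarrow> 'k) set)"
    by (rule basis_vec_Pobj[OF generic_basis[OF fs]])
  then have "\<theta> m (Pmap i m ?t (collapse m fs) (basis_vec (generic i (columns m fs))))
      = Hm m ?t (collapse m fs) (\<theta> ?t (basis_vec (generic i (columns m fs))))"
    using \<theta> m card_columns_ge_1[OF m] collapse_surjs unfolding nat_trans_def by blast
  then show ?thesis
    by (simp add: Pmap_basis_vec[OF generic_basis[OF fs]] pull_collapse_generic[OF fs])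
qed

(* The natural transformation P_i -> G sending the generic basis vector on each column set V
   to x V; on the other basis vectors it is forced by naturality (Yoneda). *)
definition extend_generic :: "('k \<Rightarrow> 'b \<Rightarrow> 'b) \<Rightarrow> (nat \<Rightarrow> nat \<Rightarrow> (nat \<Rightarrow> nat) \<Rightarrow> 'b \<Rightarrow> 'b)
    \<Rightarrow> nat \<Rightarrow> (nat list set \<Rightarrow> 'b) \<Rightarrow> nat \<Rightarrow> ((nat \<Rightarrow> nat) list \<Rightarrow> 'k::field) \<Rightarrow> 'b::ab_group_add" where
  "extend_generic sG Gm i x m c =
     (\<Sum>fs\<in>basis m i. sG (c fs) (Gm m (card (columns m fs)) (collapse m fs) (x (columns m fs))))"

lemma extend_generic_basis_vec:
  assumes "vector_space sG" "fs \<in> basis m i"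
  shows "extend_generic sG Gm i x m (basis_vec fs)
    = Gm m (card (columns m fs)) (collapse m fs) (x (columns m fs))"
proof -
  interpret vector_space sG by fact
  have "extend_generic sG Gm i x m (basis_vec fs)
      = (\<Sum>gs\<in>basis m i.
          if gs = fs then Gm m (card (columns m fs)) (collapse m fs) (x (columns m fs)) else 0)"
    unfolding extend_generic_def basis_vec_def by (rule sum.cong) auto
  then show ?thesis using assms(2) finite_basis[of m i] by simp
qed

lemma nat_trans_extend_generic:
  assumes G: "is_functor sG G Gm"
    and x: "\<And>m fs. m \<ge> 1 \<Longrightarrow> fs \<in> basis m i \<Longrightarrow> x (columns m fs) \<in> G (card (columns m fs))"
  shows "nat_trans pscale (Pobj i) (Pmap i) sG G Gm
    (extend_generic sG Gm i x :: _ \<Rightarrow> (_ \<Rightarrow> 'k::field) \<Rightarrow> _)"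
proof -
  interpret vector_space sG using G by (simp add: is_functor_def)
  let ?\<psi> = "extend_generic sG Gm i x :: _ \<Rightarrow> (_ \<Rightarrow> 'k) \<Rightarrow> _"
  have G_sub: "subspace (G m)" if "m \<ge> 1" for m
    using G that by (auto simp: is_functor_def subspace_def)
  have Gm: "Gm m n f y \<in> G m" "lin_on sG sG (G n) (Gm m n f)"
    if "m \<ge> 1" "n \<ge> 1" "f \<in> surjs m n" "y \<in> G n" for m n f y
    using G that unfolding is_functor_def by blast+
  have Gm_comp: "Gm l n (restrict (g \<circ> f) {0..<l}) y = Gm l m f (Gm m n g y)"
    if "l \<ge> 1" "m \<ge> 1" "n \<ge> 1" "f \<in> surjs l m" "g \<in> surjs m n" "y \<in> G n" for l m n f g y
    using G that unfolding is_functor_def by blast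
  have generator: "Gm m (card (columns m fs)) (collapse m fs) (x (columns m fs)) \<in> G m"
    if "m \<ge> 1" "fs \<in> basis m i" for m fs
    using Gm(1)[OF that(1) card_columns_ge_1[OF that(1)] collapse_surjs x[OF that]] .
  have \<psi>_G: "?\<psi> m c \<in> G m" if "m \<ge> 1" for m c
    unfolding extend_generic_def
    by (intro subspace_sum[OF G_sub[OF that]] ballI subspace_scale[OF G_sub[OF that]] generator[OF that])
  have \<psi>_lin: "lin_on pscale sG (Pobj i m) (?\<psi> m)" for m
    by (auto simp: lin_on_def extend_generic_def pscale_def scale_left_distrib sum.distrib
        scale_sum_right)
  have \<psi>_nat: "?\<psi> m (Pmap i m n f c) = Gm m n f (?\<psi> n c)"
    if mn: "m \<ge> 1" "n \<ge> 1" and f: "f \<in> surjs m n" and c: "c \<in> Pobj i n" for m n f c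
  proof (rule lin_on_Pobj_eqI[OF _ _ _ c])
    show "lin_on pscale sG (Pobj i n) (\<lambda>c. ?\<psi> m (Pmap i m n f c))"
      by (rule lin_on_comp[OF module_hom_imp_lin_on[OF module_hom_Pmap] \<psi>_lin])
         (auto intro: Pmap_Pobj[OF f] Pobj_add Pobj_pscale)
    show "lin_on pscale sG (Pobj i n) (\<lambda>c. Gm m n f (?\<psi> n c))"
      by (rule lin_on_comp[OF \<psi>_lin Gm(2)[OF mn f]]) (auto intro: \<psi>_G[OF mn(2)] Pobj_add Pobj_pscale)
  next
    fix fs assume fs: "fs \<in> basis n i"
    let ?V = "columns n fs"
    have "?\<psi> m (Pmap i m n f (basis_vec fs))
        = Gm m (card ?V) (restrict (collapse n fs \<circ> f) {0..<m}) (x ?V)"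
      by (simp add: Pmap_basis_vec[OF fs] columns_pull[OF f] collapse_pull[OF f]
          extend_generic_basis_vec[OF vector_space_axioms pull_basis[OF f fs]])
    also have "\<dots> = Gm m n f (Gm n (card ?V) (collapse n fs) (x ?V))"
      by (rule Gm_comp[OF mn card_columns_ge_1[OF mn(2)] f collapse_surjs x[OF mn(2) fs]])
    also have "\<dots> = Gm m n f (?\<psi> n (basis_vec fs))"
      by (simp add: extend_generic_basis_vec[OF vector_space_axioms fs])
    finally show "?\<psi> m (Pmap i m n f (basis_vec fs)) = Gm m n f (?\<psi> n (basis_vec fs))" .
  qed
  show ?thesis
    unfolding nat_trans_def using \<psi>_G \<psi>_lin \<psi>_nat by blast
qed

lemma extend_generic_lift:
  assumes G: "is_functor sG G Gm" and \<pi>: "nat_trans sG G Gm sH H Hm \<pi>"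
    and \<phi>: "nat_trans pscale (Pobj i :: nat \<Rightarrow> ((nat \<Rightarrow> nat) list \<Rightarrow> 'k::field) set) (Pmap i) sH H Hm \<phi>"
    and x: "\<And>m fs. m \<ge> 1 \<Longrightarrow> fs \<in> basis m i \<Longrightarrow> x (columns m fs) \<in> G (card (columns m fs))
      \<and> \<pi> (card (columns m fs)) (x (columns m fs))
        = \<phi> (card (columns m fs)) (basis_vec (generic i (columns m fs)))"
    and m: "m \<ge> 1" and c: "c \<in> Pobj i m"
  shows "\<pi> m (extend_generic sG Gm i x m c) = \<phi> m c"
proof -
  let ?\<psi> = "extend_generic sG Gm i x"
  have \<psi>: "nat_trans pscale (Pobj i) (Pmap i) sG G Gm (?\<psi> :: _ \<Rightarrow> (_ \<Rightarrow> 'k) \<Rightarrow> _)"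
    using nat_trans_extend_generic[OF G] x by blast
  show ?thesis
  proof (rule lin_on_Pobj_eqI[OF _ _ _ c])
    have "lin_on pscale sG (Pobj i m) (?\<psi> m)" "lin_on sG sH (G m) (\<pi> m)"
      and "\<And>c. c \<in> Pobj i m \<Longrightarrow> ?\<psi> m c \<in> G m"
      using \<psi> \<pi> m unfolding nat_trans_def by blast+
    then show "lin_on pscale sH (Pobj i m) (\<lambda>c. \<pi> m (?\<psi> m c))"
      by (rule lin_on_comp[OF _ _ _ Pobj_add Pobj_pscale])
    show "lin_on pscale sH (Pobj i m) (\<phi> m)"
      using \<phi> m unfolding nat_trans_def by blast
  next
    fix fs assume fs: "fs \<in> basis m i"
    let ?V = "columns m fs"
    have "vector_space sG" using G by (simp add: is_functor_def)
    then have "\<pi> m (?\<psi> m (basis_vec fs)) = \<pi> m (Gm m (card ?V) (collapse m fs) (x ?V))"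
      by (simp add: extend_generic_basis_vec fs)
    also have "\<dots> = Hm m (card ?V) (collapse m fs) (\<pi> (card ?V) (x ?V))"
      using \<pi> m card_columns_ge_1[OF m] collapse_surjs x[OF m fs] unfolding nat_trans_def by blast
    also have "\<dots> = \<phi> m (basis_vec fs)"
      by (simp add: x[OF m fs] nat_trans_basis_vec[OF \<phi> m fs])
    finally show "\<pi> m (?\<psi> m (basis_vec fs)) = \<phi> m (basis_vec fs)" .
  qed
qed

lemma proj_against_P:
  "proj_against pscale (Pobj i :: nat \<Rightarrow> ((nat \<Rightarrow> nat) list \<Rightarrow> 'k::field) set) (Pmap i) sG G Gm sH H Hm"
  unfolding proj_against_def
proof (intro impI allI)
  fix \<pi> \<phi>
  assume G: "is_functor sG G Gm" and "is_functor sH H Hm"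
    and \<pi>: "nat_trans sG G Gm sH H Hm \<pi>" and \<pi>_surj: "\<forall>m\<ge>1. \<pi> m ` G m = H m"
    and \<phi>: "nat_trans pscale (Pobj i :: nat \<Rightarrow> ((nat \<Rightarrow> nat) list \<Rightarrow> 'k) set) (Pmap i) sH H Hm \<phi>"
  define x where
    "x V = (SOME y. y \<in> G (card V) \<and> \<pi> (card V) y = \<phi> (card V) (basis_vec (generic i V)))" for V
  have x: "x (columns m fs) \<in> G (card (columns m fs))
      \<and> \<pi> (card (columns m fs)) (x (columns m fs))
        = \<phi> (card (columns m fs)) (basis_vec (generic i (columns m fs)))"
    if m: "m \<ge> 1" and fs: "fs \<in> basis m i" for m fs
  proof -
    let ?t = "card (columns m fs)"
    have "basis_vec (generic i (columns m fs)) \<in> Pobj i ?t"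
      by (rule basis_vec_Pobj[OF generic_basis[OF fs]])
    then have "\<phi> ?t (basis_vec (generic i (columns m fs))) \<in> H ?t"
      using \<phi> card_columns_ge_1[OF m] unfolding nat_trans_def by blast
    then have "\<phi> ?t (basis_vec (generic i (columns m fs))) \<in> \<pi> ?t ` G ?t"
      using \<pi>_surj card_columns_ge_1[OF m] by simp
    then obtain y where "y \<in> G ?t" "\<pi> ?t y = \<phi> ?t (basis_vec (generic i (columns m fs)))"
      by (rule imageE) simp
    then show ?thesis unfolding x_def by (rule someI[where P = "\<lambda>y. _ y \<and> _ y", OF conjI])
  qed
  have "nat_trans pscale (Pobj i) (Pmap i) sG G Gm (extend_generic sG Gm i x)"
    using nat_trans_extend_generic[OF G] x by blast
  moreover have "\<forall>m\<ge>1. \<forall>c\<in>Pobj i m. \<pi> m (extend_generic sG Gm i x m c) = \<phi> m c"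
    using extend_generic_lift[OF G \<pi> \<phi> x] by blast
  ultimately show "\<exists>\<psi>. nat_trans pscale (Pobj i) (Pmap i) sG G Gm \<psi>
      \<and> (\<forall>m\<ge>1. \<forall>x\<in>Pobj i m. \<pi> m (\<psi> m x) = \<phi> m x)"
    by blast
qed

theorem lemma3p12:
  shows "(\<forall>i. is_functor pscale (Pobj i :: nat \<Rightarrow> ((nat \<Rightarrow> nat) list \<Rightarrow> 'k::field) set) (Pmap i))
    \<and> is_functor ((*) :: 'k \<Rightarrow> 'k \<Rightarrow> 'k) t1obj t1map
    \<and> (\<forall>i. nat_trans pscale (Pobj (Suc i) :: nat \<Rightarrow> ((nat \<Rightarrow> nat) list \<Rightarrow> 'k) set) (Pmap (Suc i))
                     pscale (Pobj i) (Pmap i) (d (Suc i)))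
    \<and> nat_trans pscale (Pobj 0 :: nat \<Rightarrow> ((nat \<Rightarrow> nat) list \<Rightarrow> 'k) set) (Pmap 0) (*) t1obj t1map aug
    \<and> (\<forall>m\<ge>1. aug m ` (Pobj 0 m :: ((nat \<Rightarrow> nat) list \<Rightarrow> 'k) set) = t1obj m)
    \<and> (\<forall>m\<ge>1. {c \<in> (Pobj 0 m :: ((nat \<Rightarrow> nat) list \<Rightarrow> 'k) set). aug m c = 0} = d 1 m ` Pobj 1 m)
    \<and> (\<forall>m\<ge>1. \<forall>i\<ge>1. {c \<in> (Pobj i m :: ((nat \<Rightarrow> nat) list \<Rightarrow> 'k) set). d i m c = 0}
                      = d (Suc i) m ` Pobj (Suc i) m)
    \<and> (\<forall>i. \<forall>(sG :: 'k \<Rightarrow> 'b::ab_group_add \<Rightarrow> 'b) G Gm (sH :: 'k \<Rightarrow> 'c::ab_group_add \<Rightarrow> 'c) H Hm.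
          proj_against pscale (Pobj i :: nat \<Rightarrow> ((nat \<Rightarrow> nat) list \<Rightarrow> 'k) set) (Pmap i) sG G Gm sH H Hm)"
  by (intro conjI allI impI is_functor_P is_functor_t1 nat_trans_d nat_trans_aug image_aug_Pobj
      ker_aug_eq_range_d ker_d_eq_range_d proj_against_P; assumption)

end
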